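(* For every integer $k\ge2$, $$\max_{n\ge1}\frac{\log\tau_k(n)}{n}=\frac{\log k}{2}.$$
   Context: $\tau_k(n)$ is the number of ordered $k$-tuples of positive integers $(d_1,\dots,d_k)$ with $d_1\cdots d_k=n$. *)

theory Defs
  imports Complex_Main
begin

definition tau :: "nat \<Rightarrow> nat \<Rightarrow> nat" where
  "tau k n = card {ds :: nat list. length ds = k \<and> (\<forall>d\<in>set ds. d > 0) \<and> prod_list ds = n}"

end

theory Submission
  imports Defs "HOL-Computational_Algebra.Primes"
begin

text \<open>
  If a prime \<open>p\<close> divides \<open>n\<close>, every factorization of \<open>n\<close> into \<open>k\<close> factors arises from a
  factorization of \<open>n / p\<close> by multiplying one of its \<open>k\<close> entries by \<open>p\<close>, so
  \<open>\<tau>\<^sub>k(n) \<le> k \<cdot> \<tau>\<^sub>k(n / p)\<close>. Iterating over the \<open>\<Omega>(n)\<close> prime factors gives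
  \<open>\<tau>\<^sub>k(n) \<le> k\<^bsup>\<Omega>(n)\<^esup>\<close>, and \<open>2\<Omega>(n) \<le> 2\<^bsup>\<Omega>(n)\<^esup> \<le> n\<close> yields \<open>\<tau>\<^sub>k(n)\<^sup>2 \<le> k\<^sup>n\<close>.
  Equality holds at \<open>n = 2\<close>, where \<open>\<tau>\<^sub>k(2) = k\<close>.
\<close>

definition factorizations :: "nat \<Rightarrow> nat \<Rightarrow> nat list set" where
  "factorizations k n = {ds. length ds = k \<and> (\<forall>d\<in>set ds. d > 0) \<and> prod_list ds = n}"

lemma tau_eq_card_factorizations: "tau k n = card (factorizations k n)"
  by (simp add: tau_def factorizations_def)

lemma finite_factorizations:
  assumes "n > 0"
  shows "finite (factorizations k n)"
proof (rule finite_subset)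
  show "factorizations k n \<subseteq> {ds. set ds \<subseteq> {..n} \<and> length ds = k}"
    using assms by (auto simp: factorizations_def intro: dvd_imp_le prod_list_dvd)
qed (rule finite_lists_length_eq, simp)

lemma factorizations_one: "factorizations k 1 = {replicate k 1}"
  by (auto simp: factorizations_def intro!: replicate_eqI dest: prod_list_dvd)

lemma prime_dvd_prod_list_nth:
  fixes p :: "'a :: factorial_semiring"
  assumes "prime p" "p dvd prod_list xs"
  obtains i where "i < length xs" "p dvd xs ! i"
proof -
  from assms obtain x where "x \<in> set xs" "p dvd x"
    by (auto simp: prod_mset_prod_list[symmetric] prime_dvd_prod_mset_iff)
  then show thesis using that by (auto simp: in_set_conv_nth)
qed

lemma prod_list_update_mult_nth:
  fixes xs :: "'a :: comm_monoid_mult list"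
  assumes "i < length xs"
  shows "prod_list (xs[i := a]) * xs ! i = a * prod_list xs"
proof -
  have "xs = take i xs @ xs ! i # drop (Suc i) xs"
    using assms by (rule id_take_nth_drop)
  then have "prod_list xs = prod_list (take i xs) * (xs ! i * prod_list (drop (Suc i) xs))"
    by (metis prod_list.Cons prod_list.append)
  then show ?thesis
    using assms by (simp add: upd_conv_take_nth_drop ac_simps)
qed

lemma factorizations_mult_prime_subset:
  assumes "prime p"
  shows "factorizations k (p * q) \<subseteq> (\<Union>i<k. (\<lambda>es. es[i := p * es ! i]) ` factorizations k q)"
proof
  fix ds assume "ds \<in> factorizations k (p * q)"
  then have len: "length ds = k" and pos: "\<forall>d\<in>set ds. d > 0" and prod: "prod_list ds = p * q"
    by (auto simp: factorizations_def)
  then obtain i where i: "i < k" and "p dvd ds ! i"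
    using prime_dvd_prod_list_nth[OF assms] by (metis dvd_triv_left)
  then obtain c where c: "ds ! i = p * c" by blast
  define es where "es = ds[i := c]"
  have "ds ! i > 0" using pos i len by simp
  then have "c > 0" using c by simp
  have "prod_list es * (p * c) = c * (p * q)"
    using prod_list_update_mult_nth[of i ds c] i len c prod by (simp add: es_def)
  then have "prod_list es = q"
    using \<open>c > 0\<close> assms by (simp add: prime_gt_0_nat ac_simps)
  moreover have "\<forall>d\<in>set es. d > 0"
    using pos \<open>c > 0\<close> by (auto simp: es_def dest: set_update_subset_insert[THEN subsetD])
  ultimately have "es \<in> factorizations k q"
    using len by (simp add: factorizations_def es_def)
  moreover have "ds = es[i := p * es ! i]"
    using i len by (simp add: es_def c[symmetric])
  ultimately show "ds \<in> (\<Union>i<k. (\<lambda>es. es[i := p * es ! i]) ` factorizations k q)"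
    using i by blast
qed

lemma tau_mult_prime_le:
  assumes "prime p" "q > 0"
  shows "tau k (p * q) \<le> k * tau k q"
proof -
  have "tau k (p * q) \<le> card (\<Union>i<k. (\<lambda>es. es[i := p * es ! i]) ` factorizations k q)"
    unfolding tau_eq_card_factorizations
    using factorizations_mult_prime_subset[OF assms(1)] finite_factorizations[OF assms(2)]
    by (intro card_mono) auto
  also have "\<dots> \<le> (\<Sum>i<k. card ((\<lambda>es. es[i := p * es ! i]) ` factorizations k q))"
    by (rule card_UN_le) simp
  also have "\<dots> \<le> (\<Sum>i<k. tau k q)"
    unfolding tau_eq_card_factorizations by (intro sum_mono card_image_le finite_factorizations assms)
  finally show ?thesis by simp
qed

lemma tau_le_power_of_log2_bound:
  "n > 0 \<Longrightarrow> \<exists>m. 2 ^ m \<le> n \<and> tau k n \<le> k ^ m"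
proof (induction n rule: prime_divisors_induct)
  case (unit n)
  then have "n = 1" by simp
  then show ?case
    using tau_eq_card_factorizations[of k 1] factorizations_one[of k] by (intro exI[of _ 0]) simp
next
  case (factor p q)
  then obtain m where m: "2 ^ m \<le> q" "tau k q \<le> k ^ m" by auto
  have "2 \<le> p" using \<open>prime p\<close> by (rule prime_ge_2_nat)
  then have "2 ^ Suc m \<le> p * q" using m(1) by (simp add: mult_le_mono)
  moreover have "tau k (p * q) \<le> k ^ Suc m"
    using tau_mult_prime_le[OF \<open>prime p\<close>, of q k] m(2) factor.prems by (simp add: le_trans)
  ultimately show ?case by blast
qed simp

lemma double_le_power_two: "2 * m \<le> (2::nat) ^ m"
proof (induction m)
  case (Suc m)
  then show ?case by (cases m) auto
qed simp

lemma tau_squared_le: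
  assumes "k > 0" "n > 0"
  shows "tau k n ^ 2 \<le> k ^ n"
proof -
  obtain m where m: "2 ^ m \<le> n" "tau k n \<le> k ^ m"
    using tau_le_power_of_log2_bound[OF assms(2)] by blast
  have "tau k n ^ 2 \<le> (k ^ m) ^ 2"
    using m(2) by (rule power_mono) simp
  also have "\<dots> = k ^ (2 * m)"
    by (simp add: power_mult[symmetric] mult.commute)
  also have "\<dots> \<le> k ^ n"
    using assms(1) double_le_power_two[of m] m(1) by (intro power_increasing) auto
  finally show ?thesis .
qed

lemma tau_two: "tau k 2 = k"
proof -
  let ?e = "\<lambda>i. (replicate k 1)[i := 2 :: nat]"
  have "factorizations k 2 = ?e ` {..<k}"
  proof (rule subset_antisym)
    show "factorizations k 2 \<subseteq> ?e ` {..<k}"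
      using factorizations_mult_prime_subset[of 2 k 1] factorizations_one[of k] by auto
    show "?e ` {..<k} \<subseteq> factorizations k 2"
      using prod_list_update_mult_nth[of _ "replicate k (1::nat)" 2]
      by (auto simp: factorizations_def dest: set_update_subset_insert[THEN subsetD])
  qed
  moreover have "inj_on ?e {..<k}"
  proof (rule inj_onI)
    fix i j assume i: "i \<in> {..<k}" and "?e i = ?e j"
    then have "?e j ! i = 2" by (metis lessThan_iff length_replicate nth_list_update_eq)
    then show "i = j" using i by (cases "i = j") auto
  qed
  ultimately show ?thesis
    by (simp add: tau_eq_card_factorizations card_image)
qed

theorem lemma3:
  fixes k :: nat
  assumes "k \<ge> 2"
  shows "(\<forall>n::nat. n \<ge> 1 \<longrightarrow> ln (real (tau k n)) / real n \<le> ln (real k) / 2)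
       \<and> (\<exists>n::nat. n \<ge> 1 \<and> ln (real (tau k n)) / real n = ln (real k) / 2)"
proof (intro conjI allI impI)
  fix n :: nat assume n: "n \<ge> 1"
  have "2 * ln (real (tau k n)) \<le> real n * ln (real k)"
  proof (cases "tau k n = 0")
    case False
    have "tau k n ^ 2 \<le> k ^ n"
      using tau_squared_le assms n by simp
    then have "real (tau k n) ^ 2 \<le> real k ^ n"
      by (metis of_nat_le_iff of_nat_power)
    then have "ln (real (tau k n) ^ 2) \<le> ln (real k ^ n)"
      using False assms by (subst ln_le_cancel_iff) auto
    then show ?thesis
      using False assms by (simp add: ln_realpow)
  qed (use assms in simp)
  then show "ln (real (tau k n)) / real n \<le> ln (real k) / 2"
    using n by (simp add: field_simps)
next
  show "\<exists>n::nat. n \<ge> 1 \<and> ln (real (tau k n)) / real n = ln (real k) / 2"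
    by (intro exI[of _ 2]) (simp add: tau_two)
qed

end
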